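(* Let $(\Omega,\mathcal{F},P)$ be an essentially purely $P$-atomic probability space and $(E,\mathcal P)$ a random locally convex module over $K$ with base $(\Omega,\mathcal F,P)$, and let $f:E\to L^0(\mathcal F,K)$ be a module homomorphism. Then $f\in E^\ast_{min}$ (i.e. $f$ is continuous from $(E,\mathcal T_{\varepsilon,\lambda})$ to $(L^0(\mathcal F,K),\mathcal T_c)$) if and only if there exist finitely many $P$-atoms $A_1,\dots,A_n$, elements $\xi_1,\dots,\xi_n\in L^0_+$ and $\mathcal Q_1,\dots,\mathcal Q_n\in\mathcal F(\mathcal P)$ such that $$|f(x)|\le\sum_{i=1}^{n}\tilde I_{A_i}\,\xi_i\,\|x\|_{\mathcal Q_i}\quad\text{for all }x\in E.$$
   Context: $(\Omega,\mathcal{F},P)$ is a probability space, $K=\mathbb{R}$ or $\mathbb{C}$, $L^{0}(\mathcal{F},K)$ is the algebra of equivalence classes (mod a.s. equality) of $K$-valued measurable random variables, ordered a.s.; $L^0_+$ the nonnegative ones, $L^0_{++}$ those $>0$ a.s.; $\tilde I_A$ is the class of the indicator of $A$. An $L^0$-seminorm on a left $L^0(\mathcal F,K)$-module $E$ is $\|\cdot\|:E\to L^0_+$ with $\|x+y\|\le\|x\|+\|y\|$ and $\|\xi x\|=|\xi|\|x\|$. A random locally convex module $(E,\mathcal P)$ is a left $L^0(\mathcal F,K)$-module with a family $\mathcal P$ of $L^0$-seminorms such that $\bigvee_{\|\cdot\|\in\mathcal P}\|x\|=0$ implies $x=0$. $\mathcal F(\mathcal P)$ is the set of finite subfamilies of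 $\mathcal P$, and $\|x\|_{\mathcal Q}=\bigvee_{\|\cdot\|\in\mathcal Q}\|x\|$. $\mathcal T_{\varepsilon,\lambda}$ on $E$ has local base at $0$ the sets $\{x:P\{\omega:\|x\|_{\mathcal Q}(\omega)<\varepsilon\}>1-\lambda\}$ ($\mathcal Q\in\mathcal F(\mathcal P)$, $\varepsilon>0$, $0<\lambda<1$). $\mathcal T_c$ on $E$: $G$ open iff for each $x\in G$ there are $\mathcal Q\in\mathcal F(\mathcal P)$, $\varepsilon\in L^0_{++}$ with $x+\{y:\|y\|_{\mathcal Q}\le\varepsilon\}\subset G$. $L^0(\mathcal F,K)$ is regarded as a random locally convex module with $\mathcal P=\{|\cdot|\}$. A $P$-atom is $A\in\mathcal F$ with $P(A)>0$ such that every measurable $B\subset A$ has $P(B)=0$ or $P(A\setminus B)=0$. $(\Omega,\mathcal F,P)$ is essentially purely $P$-atomic if there is an at most countable family $\{A_n\}$ of disjoint atoms with $\Omega=\bigcup_n A_n$ such that every $A\in\mathcal F$ differs by a null set from some set in the $\sigma$-algebra generated by $\{A_n\}$. *)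

theory Defs
  imports "HOL-Probability.Probability"
begin

text \<open>Elements of L0(F,K) are represented by F-measurable functions; two representatives
  denote the same class iff they agree almost everywhere.  All statements about
  L0-valued quantities are made up to a.e. equality.\<close>

definition P_atom :: "'a measure \<Rightarrow> 'a set \<Rightarrow> bool" where
  "P_atom M A \<longleftrightarrow> A \<in> sets M \<and> measure M A > 0 \<and>
     (\<forall>B\<in>sets M. B \<subseteq> A \<longrightarrow> measure M B = 0 \<or> measure M (A - B) = 0)"

definition ess_purely_atomic :: "'a measure \<Rightarrow> bool" where
  "ess_purely_atomic M \<longleftrightarrow>
     (\<exists>\<A>. countable \<A> \<and> disjoint \<A> \<and> (\<forall>A\<in>\<A>. P_atom M A) \<and> \<Union>\<A> = space M \<and>
        (\<forall>A\<in>sets M. \<exists>B\<in>sigma_sets (space M) \<A>. (A - B) \<union> (B - A) \<in> null_sets M))"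

definition is_L0_module ::
  "'a measure \<Rightarrow> (('a \<Rightarrow> 'k::{real_normed_field,second_countable_topology}) \<Rightarrow> 'e::ab_group_add \<Rightarrow> 'e) \<Rightarrow> bool" where
  "is_L0_module M sm \<longleftrightarrow>
     (\<forall>\<xi>\<in>borel_measurable M. \<forall>x y. sm \<xi> (x + y) = sm \<xi> x + sm \<xi> y) \<and>
     (\<forall>\<xi>\<in>borel_measurable M. \<forall>\<eta>\<in>borel_measurable M. \<forall>x.
         sm (\<lambda>\<omega>. \<xi> \<omega> + \<eta> \<omega>) x = sm \<xi> x + sm \<eta> x) \<and>
     (\<forall>\<xi>\<in>borel_measurable M. \<forall>\<eta>\<in>borel_measurable M. \<forall>x.
         sm (\<lambda>\<omega>. \<xi> \<omega> * \<eta> \<omega>) x = sm \<xi> (sm \<eta> x)) \<and>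
     (\<forall>x. sm (\<lambda>\<omega>. 1) x = x) \<and>
     (\<forall>\<xi>\<in>borel_measurable M. \<forall>\<eta>\<in>borel_measurable M.
         (AE \<omega> in M. \<xi> \<omega> = \<eta> \<omega>) \<longrightarrow> sm \<xi> = sm \<eta>)"

definition is_L0_seminorm ::
  "'a measure \<Rightarrow> (('a \<Rightarrow> 'k::{real_normed_field,second_countable_topology}) \<Rightarrow> 'e::ab_group_add \<Rightarrow> 'e)
    \<Rightarrow> ('e \<Rightarrow> 'a \<Rightarrow> real) \<Rightarrow> bool" where
  "is_L0_seminorm M sm p \<longleftrightarrow>
     (\<forall>x. p x \<in> borel_measurable M \<and> (AE \<omega> in M. 0 \<le> p x \<omega>)) \<and>
     (\<forall>x y. AE \<omega> in M. p (x + y) \<omega> \<le> p x \<omega> + p y \<omega>) \<and>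
     (\<forall>\<xi>\<in>borel_measurable M. \<forall>x. AE \<omega> in M. p (sm \<xi> x) \<omega> = norm (\<xi> \<omega>) * p x \<omega>)"

text \<open>Random locally convex module (E, P): the whole type 'e is E.  The condition
  "the supremum of all seminorms of x is 0" is written as "every seminorm of x is 0 a.s."\<close>
definition random_lc_module ::
  "'a measure \<Rightarrow> (('a \<Rightarrow> 'k::{real_normed_field,second_countable_topology}) \<Rightarrow> 'e::ab_group_add \<Rightarrow> 'e)
    \<Rightarrow> ('e \<Rightarrow> 'a \<Rightarrow> real) set \<Rightarrow> bool" where
  "random_lc_module M sm \<P> \<longleftrightarrow> is_L0_module M sm \<and> (\<forall>p\<in>\<P>. is_L0_seminorm M sm p) \<and>
     (\<forall>x. (\<forall>p\<in>\<P>. AE \<omega> in M. p x \<omega> = 0) \<longrightarrow> x = 0)"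

definition normQ :: "('e \<Rightarrow> 'a \<Rightarrow> real) set \<Rightarrow> 'e \<Rightarrow> 'a \<Rightarrow> real" where
  "normQ Q x \<omega> = Max (insert 0 ((\<lambda>p. p x \<omega>) ` Q))"

definition eps_lambda_nbhd ::
  "'a measure \<Rightarrow> ('e \<Rightarrow> 'a \<Rightarrow> real) set \<Rightarrow> real \<Rightarrow> real \<Rightarrow> 'e set" where
  "eps_lambda_nbhd M Q \<epsilon> lam = {x. measure M {\<omega>\<in>space M. normQ Q x \<omega> < \<epsilon>} > 1 - lam}"

definition T_eps_lambda :: "'a measure \<Rightarrow> ('e::ab_group_add \<Rightarrow> 'a \<Rightarrow> real) set \<Rightarrow> 'e topology" where
  "T_eps_lambda M \<P> = topology (\<lambda>G. \<forall>x\<in>G. \<exists>Q \<epsilon> lam. finite Q \<and> Q \<subseteq> \<P> \<and> 0 < \<epsilon> \<and> 0 < lam \<and> lam < 1 \<and>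
       (\<lambda>y. x + y) ` eps_lambda_nbhd M Q \<epsilon> lam \<subseteq> G)"

text \<open>The locally L0-convex topology T_c on L0(F,K) (with P = {|.|}).\<close>
definition T_c_L0 :: "'a measure \<Rightarrow> ('a \<Rightarrow> 'k::{real_normed_field,second_countable_topology}) topology" where
  "T_c_L0 M = topology (\<lambda>G. G \<subseteq> borel_measurable M \<and>
     (\<forall>x\<in>G. \<exists>\<epsilon>\<in>borel_measurable M. (AE \<omega> in M. 0 < \<epsilon> \<omega>) \<and>
        {y \<in> borel_measurable M. AE \<omega> in M. norm (y \<omega> - x \<omega>) \<le> \<epsilon> \<omega>} \<subseteq> G))"

definition is_L0_hom ::
  "'a measure \<Rightarrow> (('a \<Rightarrow> 'k::{real_normed_field,second_countable_topology}) \<Rightarrow> 'e::ab_group_add \<Rightarrow> 'e)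
    \<Rightarrow> ('e \<Rightarrow> 'a \<Rightarrow> 'k) \<Rightarrow> bool" where
  "is_L0_hom M sm f \<longleftrightarrow> (\<forall>x. f x \<in> borel_measurable M) \<and>
     (\<forall>x y. AE \<omega> in M. f (x + y) \<omega> = f x \<omega> + f y \<omega>) \<and>
     (\<forall>\<xi>\<in>borel_measurable M. \<forall>x. AE \<omega> in M. f (sm \<xi> x) \<omega> = \<xi> \<omega> * f x \<omega>)"

end

theory Submission
  imports Defs
begin

text \<open>
  Three facts about atoms drive the proof: a random variable is
  a.s. bounded on an atom; an event of probability > 1 - P(A) contains the atom A up to a null set;
  and in an essentially purely atomic space finitely many atoms carry probability > 1 - lam.

  Sufficiency: on the finitely many atoms the weights are bounded relative to any tolerance e, and
  an (epsilon,lambda)-neighbourhood with lam below all atom masses controls the seminorms on all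
  atoms at once; continuity then follows by translation.
  Necessity: continuity at 0 yields a neighbourhood mapped into the random unit ball; scaling x by
  suitable random scalars shows |f x| \<le> (2/epsilon) normQ Q x on any event U of probability > 1 - lam
  and f x = 0 off U; taking U a finite union of atoms gives the bound.
\<close>

lemma normQ_nonneg: "finite Q \<Longrightarrow> 0 \<le> normQ Q x \<omega>"
  unfolding normQ_def by (rule Max_ge) auto

lemma normQ_mono: "finite Q' \<Longrightarrow> Q \<subseteq> Q' \<Longrightarrow> normQ Q x \<omega> \<le> normQ Q' x \<omega>"
  unfolding normQ_def by (rule Max_mono) auto

lemma normQ_insert: "finite Q \<Longrightarrow> normQ (insert p Q) x \<omega> = max (p x \<omega>) (normQ Q x \<omega>)"
proof -
  assume "finite Q"
  moreover have "insert 0 ((\<lambda>p. p x \<omega>) ` insert p Q) = insert (p x \<omega>) (insert 0 ((\<lambda>p. p x \<omega>) ` Q))"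
    by auto
  ultimately show ?thesis unfolding normQ_def by simp
qed

lemma normQ_measurable:
  assumes "finite Q" and "\<And>p. p \<in> Q \<Longrightarrow> p x \<in> borel_measurable M"
  shows "normQ Q x \<in> borel_measurable M"
  using assms
proof (induction Q rule: finite_induct)
  case empty
  then show ?case by (simp add: normQ_def[abs_def])
next
  case (insert p Q)
  then have "normQ (insert p Q) x = (\<lambda>\<omega>. max (p x \<omega>) (normQ Q x \<omega>))"
    by (simp add: normQ_insert fun_eq_iff)
  then show ?case using insert by simp
qed

lemma normQ_scale:
  assumes "finite Q" and "0 \<le> c" and "\<And>p. p \<in> Q \<Longrightarrow> p y \<omega> = c * p x \<omega>"
  shows "normQ Q y \<omega> = c * normQ Q x \<omega>"
  using assms
proof (induction Q rule: finite_induct)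
  case empty
  then show ?case by (simp add: normQ_def)
next
  case (insert p Q)
  then show ?case by (simp add: normQ_insert max_mult_distrib_left)
qed

text \<open>Both T_eps_lambda and T_c_L0 are of this form.\<close>
lemma istopology_neighbourhood_bases:
  assumes directed: "\<And>x b1 b2. b1 \<in> B x \<Longrightarrow> b2 \<in> B x \<Longrightarrow> \<exists>b\<in>B x. b \<subseteq> b1 \<inter> b2"
  shows "istopology (\<lambda>G. G \<subseteq> S \<and> (\<forall>x\<in>G. \<exists>b\<in>B x. b \<subseteq> G))"
  unfolding istopology_def
proof (rule conjI; intro allI impI)
  fix G H assume G: "G \<subseteq> S \<and> (\<forall>x\<in>G. \<exists>b\<in>B x. b \<subseteq> G)" and H: "H \<subseteq> S \<and> (\<forall>x\<in>H. \<exists>b\<in>B x. b \<subseteq> H)"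
  show "G \<inter> H \<subseteq> S \<and> (\<forall>x\<in>G \<inter> H. \<exists>b\<in>B x. b \<subseteq> G \<inter> H)"
  proof (intro conjI ballI)
    show "G \<inter> H \<subseteq> S" using G by blast
    fix x assume "x \<in> G \<inter> H"
    then obtain b1 b2 where "b1 \<in> B x" "b1 \<subseteq> G" "b2 \<in> B x" "b2 \<subseteq> H"
      using G H by blast
    moreover from directed[OF this(1,3)] obtain b where "b \<in> B x" "b \<subseteq> b1 \<inter> b2" by blast
    ultimately show "\<exists>b\<in>B x. b \<subseteq> G \<inter> H" by blast
  qed
next
  fix \<K> assume \<K>: "\<forall>G\<in>\<K>. G \<subseteq> S \<and> (\<forall>x\<in>G. \<exists>b\<in>B x. b \<subseteq> G)"
  show "\<Union>\<K> \<subseteq> S \<and> (\<forall>x\<in>\<Union>\<K>. \<exists>b\<in>B x. b \<subseteq> \<Union>\<K>)"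
  proof (intro conjI ballI)
    show "\<Union>\<K> \<subseteq> S" using \<K> by blast
    fix x assume "x \<in> \<Union>\<K>"
    then obtain G where "G \<in> \<K>" "x \<in> G" by blast
    with \<K> obtain b where "b \<in> B x" "b \<subseteq> G" by blast
    with \<open>G \<in> \<K>\<close> show "\<exists>b\<in>B x. b \<subseteq> \<Union>\<K>" by blast
  qed
qed

lemma eps_lambda_nbhd_mono:
  assumes M: "prob_space M" and Q': "finite Q'" "\<forall>p\<in>Q'. \<forall>x. p x \<in> borel_measurable M"
    and "Q \<subseteq> Q'" "\<epsilon>' \<le> \<epsilon>" "lam' \<le> lam"
  shows "eps_lambda_nbhd M Q' \<epsilon>' lam' \<subseteq> eps_lambda_nbhd M Q \<epsilon> lam"
proof
  interpret prob_space M by (rule M)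
  fix y assume y: "y \<in> eps_lambda_nbhd M Q' \<epsilon>' lam'"
  have "normQ Q y \<in> borel_measurable M"
    using Q' \<open>Q \<subseteq> Q'\<close> by (intro normQ_measurable) (auto intro: finite_subset)
  then have "{\<omega>\<in>space M. normQ Q y \<omega> < \<epsilon>} \<in> sets M" by measurable
  moreover have "{\<omega>\<in>space M. normQ Q' y \<omega> < \<epsilon>'} \<subseteq> {\<omega>\<in>space M. normQ Q y \<omega> < \<epsilon>}"
  proof
    fix \<omega> assume "\<omega> \<in> {\<omega>\<in>space M. normQ Q' y \<omega> < \<epsilon>'}"
    with normQ_mono[OF Q'(1) \<open>Q \<subseteq> Q'\<close>, of y \<omega>] \<open>\<epsilon>' \<le> \<epsilon>\<close>
    show "\<omega> \<in> {\<omega>\<in>space M. normQ Q y \<omega> < \<epsilon>}" by auto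
  qed
  ultimately have "measure M {\<omega>\<in>space M. normQ Q' y \<omega> < \<epsilon>'} \<le> measure M {\<omega>\<in>space M. normQ Q y \<omega> < \<epsilon>}"
    by (intro finite_measure_mono)
  then show "y \<in> eps_lambda_nbhd M Q \<epsilon> lam"
    using y \<open>lam' \<le> lam\<close> unfolding eps_lambda_nbhd_def by auto
qed

lemma openin_T_eps_lambda:
  assumes M: "prob_space M" and meas: "\<forall>p\<in>\<P>. \<forall>x. p x \<in> borel_measurable M"
  shows "openin (T_eps_lambda M \<P>) G \<longleftrightarrow> (\<forall>x\<in>G. \<exists>Q \<epsilon> lam. finite Q \<and> Q \<subseteq> \<P> \<and> 0 < \<epsilon> \<and> 0 < lam \<and> lam < 1 \<and>
       (\<lambda>y. x + y) ` eps_lambda_nbhd M Q \<epsilon> lam \<subseteq> G)"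
proof -
  define B where "B x = {(\<lambda>y. x + y) ` eps_lambda_nbhd M Q \<epsilon> lam | Q \<epsilon> lam.
    finite Q \<and> Q \<subseteq> \<P> \<and> 0 < \<epsilon> \<and> 0 < lam \<and> lam < 1}" for x
  have "istopology (\<lambda>G. G \<subseteq> UNIV \<and> (\<forall>x\<in>G. \<exists>b\<in>B x. b \<subseteq> G))"
  proof (rule istopology_neighbourhood_bases)
    fix x b1 b2 assume "b1 \<in> B x" "b2 \<in> B x"
    then obtain Q1 \<epsilon>1 lam1 Q2 \<epsilon>2 lam2
      where b1: "b1 = (\<lambda>y. x + y) ` eps_lambda_nbhd M Q1 \<epsilon>1 lam1"
        "finite Q1 \<and> Q1 \<subseteq> \<P> \<and> 0 < \<epsilon>1 \<and> 0 < lam1 \<and> lam1 < 1"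
      and b2: "b2 = (\<lambda>y. x + y) ` eps_lambda_nbhd M Q2 \<epsilon>2 lam2"
        "finite Q2 \<and> Q2 \<subseteq> \<P> \<and> 0 < \<epsilon>2 \<and> 0 < lam2 \<and> lam2 < 1"
      unfolding B_def by blast
    let ?N = "eps_lambda_nbhd M (Q1 \<union> Q2) (min \<epsilon>1 \<epsilon>2) (min lam1 lam2)"
    have "?N \<subseteq> eps_lambda_nbhd M Q1 \<epsilon>1 lam1" "?N \<subseteq> eps_lambda_nbhd M Q2 \<epsilon>2 lam2"
      using b1(2) b2(2) meas by (intro eps_lambda_nbhd_mono[OF M]; auto)+
    then have "(\<lambda>y. x + y) ` ?N \<subseteq> b1 \<inter> b2" unfolding b1 b2 by blast
    moreover have "(\<lambda>y. x + y) ` ?N \<in> B x" unfolding B_def using b1(2) b2(2) by force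
    ultimately show "\<exists>b\<in>B x. b \<subseteq> b1 \<inter> b2" by blast
  qed
  moreover have "(\<exists>b\<in>B x. b \<subseteq> G) \<longleftrightarrow> (\<exists>Q \<epsilon> lam. finite Q \<and> Q \<subseteq> \<P> \<and> 0 < \<epsilon> \<and> 0 < lam \<and> lam < 1 \<and>
       (\<lambda>y. x + y) ` eps_lambda_nbhd M Q \<epsilon> lam \<subseteq> G)" for x G
    unfolding B_def by blast
  ultimately show ?thesis unfolding T_eps_lambda_def by simp
qed

lemma openin_T_c_L0:
  fixes M :: "'a measure" and G :: "('a \<Rightarrow> 'k::{real_normed_field,second_countable_topology}) set"
  shows "openin (T_c_L0 M) G \<longleftrightarrow> G \<subseteq> borel_measurable M \<and>
     (\<forall>x\<in>G. \<exists>\<epsilon>\<in>borel_measurable M. (AE \<omega> in M. 0 < \<epsilon> \<omega>) \<and>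
        {y \<in> borel_measurable M. AE \<omega> in M. norm (y \<omega> - x \<omega>) \<le> \<epsilon> \<omega>} \<subseteq> G)"
proof -
  define B where "B x = {{y \<in> borel_measurable M. AE \<omega> in M. norm (y \<omega> - x \<omega> :: 'k) \<le> \<epsilon> \<omega>} | \<epsilon>.
      \<epsilon> \<in> borel_measurable M \<and> (AE \<omega> in M. 0 < \<epsilon> \<omega>)}" for x
  have "istopology (\<lambda>G. G \<subseteq> borel_measurable M \<and> (\<forall>x\<in>G. \<exists>b\<in>B x. b \<subseteq> G))"
  proof (rule istopology_neighbourhood_bases)
    fix x b1 b2 assume "b1 \<in> B x" "b2 \<in> B x"
    then obtain \<epsilon>1 \<epsilon>2 :: "'a \<Rightarrow> real"
      where b1: "b1 = {y \<in> borel_measurable M. AE \<omega> in M. norm (y \<omega> - x \<omega>) \<le> \<epsilon>1 \<omega>}"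
        "\<epsilon>1 \<in> borel_measurable M" "AE \<omega> in M. 0 < \<epsilon>1 \<omega>"
      and b2: "b2 = {y \<in> borel_measurable M. AE \<omega> in M. norm (y \<omega> - x \<omega>) \<le> \<epsilon>2 \<omega>}"
        "\<epsilon>2 \<in> borel_measurable M" "AE \<omega> in M. 0 < \<epsilon>2 \<omega>"
      unfolding B_def by blast
    let ?b = "{y \<in> borel_measurable M. AE \<omega> in M. norm (y \<omega> - x \<omega>) \<le> min (\<epsilon>1 \<omega>) (\<epsilon>2 \<omega>)}"
    have "?b \<in> B x"
      unfolding B_def using b1(2,3) b2(2,3) by (intro CollectI exI[of _ "\<lambda>\<omega>. min (\<epsilon>1 \<omega>) (\<epsilon>2 \<omega>)"]) auto
    moreover have "?b \<subseteq> b1 \<inter> b2"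
    proof
      fix y assume y: "y \<in> ?b"
      then have "AE \<omega> in M. norm (y \<omega> - x \<omega>) \<le> \<epsilon>1 \<omega>" "AE \<omega> in M. norm (y \<omega> - x \<omega>) \<le> \<epsilon>2 \<omega>"
        by (auto elim!: eventually_mono)
      then show "y \<in> b1 \<inter> b2" using y unfolding b1(1) b2(1) by blast
    qed
    ultimately show "\<exists>b\<in>B x. b \<subseteq> b1 \<inter> b2" by blast
  qed
  moreover have "(\<exists>b\<in>B x. b \<subseteq> G) \<longleftrightarrow> (\<exists>\<epsilon>\<in>borel_measurable M. (AE \<omega> in M. 0 < \<epsilon> \<omega>) \<and>
        {y \<in> borel_measurable M. AE \<omega> in M. norm (y \<omega> - x \<omega>) \<le> \<epsilon> \<omega>} \<subseteq> G)" for x G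
    unfolding B_def by blast
  ultimately show ?thesis unfolding T_c_L0_def by simp
qed

lemma topspace_T_eps_lambda:
  assumes "prob_space M" and "\<forall>p\<in>\<P>. \<forall>x. p x \<in> borel_measurable M"
  shows "topspace (T_eps_lambda M \<P>) = UNIV"
proof -
  have "openin (T_eps_lambda M \<P>) UNIV"
    unfolding openin_T_eps_lambda[OF assms] by (intro ballI exI[of _ "{}"] exI[of _ 1] exI[of _ "1/2"]) auto
  then show ?thesis using openin_subset by auto
qed

lemma topspace_T_c_L0: "topspace (T_c_L0 M) = borel_measurable M"
proof -
  have "openin (T_c_L0 M) (borel_measurable M)"
    unfolding openin_T_c_L0 by (intro conjI ballI bexI[of _ "\<lambda>_. 1"]) auto
  moreover have "G \<subseteq> borel_measurable M" if "openin (T_c_L0 M) G" for G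
    using that unfolding openin_T_c_L0 by blast
  ultimately show ?thesis unfolding topspace_def by blast
qed

lemma P_atomD:
  assumes "P_atom M A"
  shows "A \<in> sets M" "measure M A > 0"
    "\<And>B. B \<in> sets M \<Longrightarrow> B \<subseteq> A \<Longrightarrow> measure M B = 0 \<or> measure M (A - B) = 0"
  using assms unfolding P_atom_def by auto

text \<open>A real random variable is a.s. bounded above on a P-atom: the sets A \<inter> {g \<le> m} increase
  to A, so one of them has positive measure, hence full measure in A.\<close>
lemma atom_bounded:
  fixes g :: "'a \<Rightarrow> real"
  assumes M: "prob_space M" and A: "P_atom M A" and g: "g \<in> borel_measurable M"
  shows "\<exists>c. AE \<omega> in M. \<omega> \<in> A \<longrightarrow> g \<omega> \<le> c"
proof -
  interpret prob_space M by (rule M)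
  define B where "B m = A \<inter> {\<omega>\<in>space M. g \<omega> \<le> real m}" for m :: nat
  have B_sets: "B m \<in> sets M" for m
  proof -
    have "{\<omega>\<in>space M. g \<omega> \<le> real m} \<in> sets M" using g by measurable
    then show ?thesis unfolding B_def using P_atomD(1)[OF A] by auto
  qed
  have "incseq B"
  proof (rule incseq_SucI)
    show "B m \<subseteq> B (Suc m)" for m unfolding B_def by auto
  qed
  moreover have "(\<Union>m. B m) = A"
  proof
    show "A \<subseteq> (\<Union>m. B m)"
    proof
      fix \<omega> assume "\<omega> \<in> A"
      moreover have "g \<omega> \<le> real (nat \<lceil>g \<omega>\<rceil>)" by (rule real_nat_ceiling_ge)
      ultimately have "\<omega> \<in> B (nat \<lceil>g \<omega>\<rceil>)"
        using sets.sets_into_space[OF P_atomD(1)[OF A]] unfolding B_def by auto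
      then show "\<omega> \<in> (\<Union>m. B m)" by blast
    qed
  qed (auto simp: B_def)
  ultimately have "(\<lambda>m. measure M (B m)) \<longlonglongrightarrow> measure M A"
    using finite_Lim_measure_incseq[of B] B_sets by auto
  from order_tendstoD(1)[OF this P_atomD(2)[OF A]]
  obtain m where m: "measure M (B m) > 0" by (auto simp: eventually_sequentially)
  have "B m \<subseteq> A" by (auto simp: B_def)
  with m have "measure M (A - B m) = 0"
    using P_atomD(3)[OF A B_sets] by fastforce
  then have "A - B m \<in> null_sets M"
    using P_atomD(1)[OF A] B_sets by (intro null_setsI) (auto simp: emeasure_eq_measure)
  then have "AE \<omega> in M. \<omega> \<in> A \<longrightarrow> g \<omega> \<le> real m"
    by (rule AE_I') (auto simp: B_def)
  then show ?thesis by (rule exI)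
qed

lemma atoms_bounded:
  fixes g :: "'a \<Rightarrow> real" and n :: nat and A :: "nat \<Rightarrow> 'a set"
  assumes M: "prob_space M" and A: "\<forall>i<n. P_atom M (A i)" and g: "g \<in> borel_measurable M"
  shows "\<exists>C>0. AE \<omega> in M. \<omega> \<in> (\<Union>i<n. A i) \<longrightarrow> g \<omega> \<le> C"
proof -
  have "\<forall>i\<in>{..<n}. \<exists>c. AE \<omega> in M. \<omega> \<in> A i \<longrightarrow> g \<omega> \<le> c"
    using atom_bounded[OF M _ g] A by blast
  from bchoice[OF this] obtain c where c: "\<forall>i\<in>{..<n}. AE \<omega> in M. \<omega> \<in> A i \<longrightarrow> g \<omega> \<le> c i"
    by blast
  define C where "C = 1 + (\<Sum>i<n. \<bar>c i\<bar>)"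
  have "C > 0" unfolding C_def by (simp add: add_pos_nonneg sum_nonneg)
  have c_le_C: "c i \<le> C" if "i < n" for i
  proof -
    have "\<bar>c i\<bar> \<le> (\<Sum>i<n. \<bar>c i\<bar>)" using that by (intro member_le_sum) auto
    then show ?thesis unfolding C_def by linarith
  qed
  have "AE \<omega> in M. \<forall>i\<in>{..<n}. \<omega> \<in> A i \<longrightarrow> g \<omega> \<le> c i"
    using c by (intro eventually_ball_finite) auto
  then have "AE \<omega> in M. \<omega> \<in> (\<Union>i<n. A i) \<longrightarrow> g \<omega> \<le> C"
  proof eventually_elim
    case (elim \<omega>)
    show ?case
    proof
      assume "\<omega> \<in> (\<Union>i<n. A i)"
      then obtain i where "i < n" "\<omega> \<in> A i" by blast
      with elim have "g \<omega> \<le> c i" by blast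
      with c_le_C[OF \<open>i < n\<close>] show "g \<omega> \<le> C" by linarith
    qed
  qed
  with \<open>C > 0\<close> show ?thesis by (intro exI[of _ C]) simp
qed

text \<open>An event whose probability exceeds 1 - P(A) meets the atom A in positive measure,
  hence contains A up to a null set.\<close>
lemma atom_in_large_set:
  assumes M: "prob_space M" and A: "P_atom M A" and S: "S \<in> sets M"
    and large: "measure M S > 1 - measure M A"
  shows "AE \<omega> in M. \<omega> \<in> A \<longrightarrow> \<omega> \<in> S"
proof -
  interpret prob_space M by (rule M)
  have A_sets: "A \<in> sets M" and AS_sets: "A \<inter> S \<in> sets M"
    using P_atomD(1)[OF A] S by auto
  have "measure M (A \<inter> S) \<noteq> 0"
  proof
    assume "measure M (A \<inter> S) = 0"
    then have "measure M A = measure M (A - S)"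
      using finite_measure_Diff[OF A_sets AS_sets] by (simp add: Diff_Int)
    also have "\<dots> \<le> measure M (space M - S)"
      using sets.sets_into_space[OF A_sets] S by (intro finite_measure_mono) auto
    also have "\<dots> = 1 - measure M S" using S by (simp add: prob_compl)
    finally show False using large by linarith
  qed
  then have "measure M (A - A \<inter> S) = 0" using P_atomD(3)[OF A AS_sets] by auto
  then have "A - A \<inter> S \<in> null_sets M"
    using A_sets AS_sets by (intro null_setsI) (auto simp: emeasure_eq_measure)
  then show ?thesis by (rule AE_I') auto
qed

lemma atoms_in_large_sets:
  fixes n :: nat and A :: "nat \<Rightarrow> 'a set"
  assumes M: "prob_space M" and A: "\<forall>i<n. P_atom M (A i)"
  obtains lam where "0 < lam" "lam < 1"
    "\<And>S. S \<in> sets M \<Longrightarrow> measure M S > 1 - lam \<Longrightarrow> AE \<omega> in M. \<omega> \<in> (\<Union>i<n. A i) \<longrightarrow> \<omega> \<in> S"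
proof
  define lam where "lam = Min (insert (1/2) ((\<lambda>i. measure M (A i)) ` {..<n}))"
  show "0 < lam" unfolding lam_def using A by (subst Min_gr_iff) (auto simp: P_atomD(2) finite_imageI)
  have "lam \<le> 1/2" unfolding lam_def by (rule Min_le) auto
  then show "lam < 1" by simp
  fix S assume S: "S \<in> sets M" "measure M S > 1 - lam"
  have lam_le: "lam \<le> measure M (A i)" if "i < n" for i
    unfolding lam_def using that by (intro Min_le) auto
  have "AE \<omega> in M. \<omega> \<in> A i \<longrightarrow> \<omega> \<in> S" if "i < n" for i
  proof (rule atom_in_large_set[OF M _ S(1)])
    show "P_atom M (A i)" using A that by blast
    show "measure M S > 1 - measure M (A i)" using S(2) lam_le[OF that] by linarith
  qed
  then have "AE \<omega> in M. \<forall>i\<in>{..<n}. \<omega> \<in> A i \<longrightarrow> \<omega> \<in> S"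
    by (intro eventually_ball_finite) auto
  then show "AE \<omega> in M. \<omega> \<in> (\<Union>i<n. A i) \<longrightarrow> \<omega> \<in> S"
    by eventually_elim blast
qed

text \<open>In an essentially purely atomic probability space, finitely many of the countably many
  atoms already carry probability > 1 - lam, by continuity of measure from below.\<close>
lemma purely_atomic_exhaustion:
  assumes M: "prob_space M" and atomic: "ess_purely_atomic M" and "0 < lam"
  obtains A :: "nat \<Rightarrow> 'a set" and N where "\<And>i. P_atom M (A i)"
    "(\<Union>i<N. A i) \<in> sets M" "measure M (\<Union>i<N. A i) > 1 - lam"
proof -
  interpret prob_space M by (rule M)
  obtain \<A> where \<A>: "countable \<A>" "\<forall>A\<in>\<A>. P_atom M A" "\<Union>\<A> = space M"
    using atomic unfolding ess_purely_atomic_def by blast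
  then have "\<A> \<noteq> {}" using not_empty by auto
  define A where "A = from_nat_into \<A>"
  have atoms: "P_atom M (A i)" for i
    unfolding A_def using \<A>(2) from_nat_into[OF \<open>\<A> \<noteq> {}\<close>] by blast
  have sets: "(\<Union>i<N. A i) \<in> sets M" for N
    using atoms P_atomD(1) by (intro sets.finite_UN) auto
  have "incseq (\<lambda>N. \<Union>i<N. A i)" by (force simp: incseq_def)
  with sets have "(\<lambda>N. measure M (\<Union>i<N. A i)) \<longlonglongrightarrow> measure M (\<Union>N. \<Union>i<N. A i)"
    by (intro finite_Lim_measure_incseq) auto
  also have "(\<Union>N. \<Union>i<N. A i) = (\<Union>i. A i)" by blast
  also have "\<dots> = space M"
    unfolding A_def range_from_nat_into[OF \<open>\<A> \<noteq> {}\<close> \<A>(1)] using \<A>(3) by simp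
  finally have "(\<lambda>N. measure M (\<Union>i<N. A i)) \<longlonglongrightarrow> 1" using prob_space by simp
  from order_tendstoD(1)[OF this, of "1 - lam"] \<open>0 < lam\<close>
  obtain N where "measure M (\<Union>i<N. A i) > 1 - lam" by (auto simp: eventually_sequentially)
  with atoms sets show ?thesis using that by blast
qed

lemma random_lc_module_measurable:
  "random_lc_module M sm \<P> \<Longrightarrow> \<forall>p\<in>\<P>. \<forall>x. p x \<in> borel_measurable M"
  unfolding random_lc_module_def is_L0_seminorm_def by blast

lemma normQ_random_measurable:
  assumes "random_lc_module M sm \<P>" "finite Q" "Q \<subseteq> \<P>"
  shows "normQ Q x \<in> borel_measurable M"
  using assms random_lc_module_measurable[OF assms(1)] by (intro normQ_measurable) auto

lemma normQ_module_scale: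
  assumes rlc: "random_lc_module M sm \<P>" and Q: "finite Q" "Q \<subseteq> \<P>" and t: "t \<in> borel_measurable M"
  shows "AE \<omega> in M. normQ Q (sm t x) \<omega> = norm (t \<omega>) * normQ Q x \<omega>"
proof -
  have "\<forall>p\<in>Q. AE \<omega> in M. p (sm t x) \<omega> = norm (t \<omega>) * p x \<omega>"
    using rlc Q t unfolding random_lc_module_def is_L0_seminorm_def by blast
  then have "AE \<omega> in M. \<forall>p\<in>Q. p (sm t x) \<omega> = norm (t \<omega>) * p x \<omega>"
    by (rule eventually_ball_finite[OF Q(1)])
  then show ?thesis
    by eventually_elim (rule normQ_scale[OF Q(1)], auto)
qed

lemma L0_hom_zero:
  assumes "is_L0_hom M sm f"
  shows "AE \<omega> in M. f 0 \<omega> = 0"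
proof -
  have "AE \<omega> in M. f (0 + 0) \<omega> = f 0 \<omega> + f 0 \<omega>" using assms unfolding is_L0_hom_def by blast
  then show ?thesis by eventually_elim simp
qed

lemma L0_hom_translate:
  assumes "is_L0_hom M sm f"
  shows "AE \<omega> in M. f (x + y) \<omega> - f x \<omega> = f y \<omega>"
proof -
  have "AE \<omega> in M. f (x + y) \<omega> = f x \<omega> + f y \<omega>" using assms unfolding is_L0_hom_def by blast
  then show ?thesis by eventually_elim simp
qed

lemma L0_hom_scale:
  assumes "is_L0_hom M sm f" and "\<xi> \<in> borel_measurable M"
  shows "AE \<omega> in M. f (sm \<xi> x) \<omega> = \<xi> \<omega> * f x \<omega>"
proof -
  have "\<And>\<xi> x. \<xi> \<in> borel_measurable M \<Longrightarrow> AE \<omega> in M. f (sm \<xi> x) \<omega> = \<xi> \<omega> * f x \<omega>"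
    using assms(1) unfolding is_L0_hom_def by blast
  then show ?thesis using assms(2) .
qed

text \<open>Continuity criterion: f is continuous as soon as, for every strictly positive random
  tolerance e, some (epsilon,lambda)-neighbourhood of 0 is mapped into {|f y| \<le> e}; the general
  case reduces to 0 by translation, since f (x + y) - f x = f y.\<close>
lemma continuous_map_if_small_near_zero:
  fixes f :: "'e::ab_group_add \<Rightarrow> 'a \<Rightarrow> 'k::{real_normed_field,second_countable_topology}"
  assumes M: "prob_space M" and rlc: "random_lc_module M sm \<P>" and hom: "is_L0_hom M sm f"
    and small: "\<And>e. e \<in> borel_measurable M \<Longrightarrow> AE \<omega> in M. 0 < e \<omega> \<Longrightarrow>
      \<exists>Q \<delta> lam. finite Q \<and> Q \<subseteq> \<P> \<and> 0 < \<delta> \<and> 0 < lam \<and> lam < 1 \<and>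
        (\<forall>y\<in>eps_lambda_nbhd M Q \<delta> lam. AE \<omega> in M. norm (f y \<omega>) \<le> e \<omega>)"
  shows "continuous_map (T_eps_lambda M \<P>) (T_c_L0 M) f"
proof -
  note meas = random_lc_module_measurable[OF rlc]
  have f_meas: "f x \<in> borel_measurable M" for x using hom unfolding is_L0_hom_def by blast
  show ?thesis
    unfolding continuous_map_def topspace_T_eps_lambda[OF M meas] topspace_T_c_L0
  proof (intro conjI allI impI)
    show "f \<in> UNIV \<rightarrow> borel_measurable M" using f_meas by blast
    fix U :: "('a \<Rightarrow> 'k) set" assume U: "openin (T_c_L0 M) U"
    show "openin (T_eps_lambda M \<P>) {x \<in> UNIV. f x \<in> U}"
      unfolding openin_T_eps_lambda[OF M meas]
    proof
      fix x assume "x \<in> {x \<in> UNIV. f x \<in> U}"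
      then obtain e where e: "e \<in> borel_measurable M" "AE \<omega> in M. 0 < e \<omega>"
        "{z \<in> borel_measurable M. AE \<omega> in M. norm (z \<omega> - f x \<omega>) \<le> e \<omega>} \<subseteq> U"
        using U unfolding openin_T_c_L0 by blast
      from small[OF e(1,2)] obtain Q \<delta> lam where Q: "finite Q \<and> Q \<subseteq> \<P> \<and> 0 < \<delta> \<and> 0 < lam \<and> lam < 1"
        and f_small: "\<forall>y\<in>eps_lambda_nbhd M Q \<delta> lam. AE \<omega> in M. norm (f y \<omega>) \<le> e \<omega>"
        by blast
      have "f (x + y) \<in> U" if "y \<in> eps_lambda_nbhd M Q \<delta> lam" for y
      proof -
        have "AE \<omega> in M. norm (f (x + y) \<omega> - f x \<omega>) \<le> e \<omega>"
          using f_small that L0_hom_translate[OF hom, of x y] by (auto elim: eventually_rev_mp)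
        then show ?thesis using e(3) f_meas by blast
      qed
      then show "\<exists>Q \<delta> lam. finite Q \<and> Q \<subseteq> \<P> \<and> 0 < \<delta> \<and> 0 < lam \<and> lam < 1 \<and>
         (\<lambda>y. x + y) ` eps_lambda_nbhd M Q \<delta> lam \<subseteq> {x \<in> UNIV. f x \<in> U}"
        using Q by blast
    qed
  qed
qed

lemma weighted_sum_le_scaled:
  fixes \<xi> q :: "nat \<Rightarrow> real" and \<delta> :: real
  assumes "\<And>i. i < n \<Longrightarrow> \<omega> \<in> A i \<Longrightarrow> 0 \<le> \<xi> i \<and> q i \<le> \<delta>"
  shows "(\<Sum>i<n. indicator (A i) \<omega> * \<xi> i * q i) \<le> \<delta> * (\<Sum>i<n. indicator (A i) \<omega> * \<xi> i)"
proof -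
  have "(\<Sum>i<n. indicator (A i) \<omega> * \<xi> i * q i) \<le> (\<Sum>i<n. indicator (A i) \<omega> * \<xi> i * \<delta>)"
    using assms by (intro sum_mono) (auto simp: indicator_def intro: mult_left_mono)
  also have "\<dots> = (\<Sum>i<n. indicator (A i) \<omega> * \<xi> i) * \<delta>"
    by (rule sum_distrib_right[symmetric])
  finally show ?thesis by (simp only: mult.commute)
qed

text \<open>Sufficiency of the bound: on the finitely many atoms the weight s = \<Sum> I(A_i) xi_i is
  a.s. at most C e; a neighbourhood with threshold 1/C in the seminorm of \<Union> Q_i and lam from
  atoms_in_large_sets forces normQ < 1/C a.s. on all atoms, hence |f y| \<le> e.\<close>
lemma atomic_bound_imp_small_near_zero:
  fixes f :: "'e::ab_group_add \<Rightarrow> 'a \<Rightarrow> 'k::{real_normed_field,second_countable_topology}"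
    and n :: nat and A :: "nat \<Rightarrow> 'a set" and \<xi> :: "nat \<Rightarrow> 'a \<Rightarrow> real"
  assumes M: "prob_space M" and rlc: "random_lc_module M sm \<P>"
    and H: "\<forall>i<n. P_atom M (A i) \<and> \<xi> i \<in> borel_measurable M \<and> (AE \<omega> in M. 0 \<le> \<xi> i \<omega>) \<and>
              finite (Q i) \<and> Q i \<subseteq> \<P>"
    and bound: "\<forall>x. AE \<omega> in M. norm (f x \<omega>) \<le> (\<Sum>i<n. indicator (A i) \<omega> * \<xi> i \<omega> * normQ (Q i) x \<omega>)"
    and e: "e \<in> borel_measurable M" "AE \<omega> in M. 0 < e \<omega>"
  shows "\<exists>Q \<delta> lam. finite Q \<and> Q \<subseteq> \<P> \<and> 0 < \<delta> \<and> 0 < lam \<and> lam < 1 \<and>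
    (\<forall>y\<in>eps_lambda_nbhd M Q \<delta> lam. AE \<omega> in M. norm (f y \<omega>) \<le> e \<omega>)"
proof -
  interpret prob_space M by (rule M)
  define U where "U = (\<Union>i<n. A i)"
  define s where "s \<omega> = (\<Sum>i<n. indicator (A i) \<omega> * \<xi> i \<omega>)" for \<omega>
  have atoms: "\<forall>i<n. P_atom M (A i)" using H by blast
  have "s \<in> borel_measurable M"
    unfolding s_def using H P_atomD(1)
    by (intro borel_measurable_sum borel_measurable_times borel_measurable_indicator) auto
  then have "(\<lambda>\<omega>. s \<omega> / e \<omega>) \<in> borel_measurable M" using e(1) by measurable
  then obtain C where "C > 0" and C: "AE \<omega> in M. \<omega> \<in> U \<longrightarrow> s \<omega> / e \<omega> \<le> C"
    using atoms_bounded[OF M atoms] unfolding U_def by blast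
  obtain lam where lam: "0 < lam" "lam < 1"
    and large: "\<And>S. S \<in> sets M \<Longrightarrow> measure M S > 1 - lam \<Longrightarrow> AE \<omega> in M. \<omega> \<in> U \<longrightarrow> \<omega> \<in> S"
    using atoms_in_large_sets[OF M atoms] unfolding U_def by blast
  define Q' where "Q' = (\<Union>i<n. Q i)"
  have Q': "finite Q'" "Q' \<subseteq> \<P>" unfolding Q'_def using H by auto
  have "AE \<omega> in M. norm (f y \<omega>) \<le> e \<omega>" if y: "y \<in> eps_lambda_nbhd M Q' (1 / C) lam" for y
  proof -
    define S where "S = {\<omega>\<in>space M. normQ Q' y \<omega> < 1 / C}"
    have "normQ Q' y \<in> borel_measurable M" by (rule normQ_random_measurable[OF rlc Q'])
    then have "S \<in> sets M" unfolding S_def by measurable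
    moreover have "measure M S > 1 - lam" using y unfolding eps_lambda_nbhd_def S_def by simp
    ultimately have in_S: "AE \<omega> in M. \<omega> \<in> U \<longrightarrow> \<omega> \<in> S" by (rule large)
    have \<xi>_nonneg: "AE \<omega> in M. \<forall>i\<in>{..<n}. 0 \<le> \<xi> i \<omega>"
      using H by (intro eventually_ball_finite) auto
    show ?thesis
      using in_S C e(2) bound[rule_format, of y] \<xi>_nonneg
    proof eventually_elim
      case (elim \<omega>)
      have nq_small: "normQ (Q i) y \<omega> \<le> 1 / C" if "i < n" "\<omega> \<in> A i" for i
      proof -
        have "\<omega> \<in> S" using elim(1) that unfolding U_def by blast
        moreover have "normQ (Q i) y \<omega> \<le> normQ Q' y \<omega>"
          using that Q'(1) by (intro normQ_mono) (auto simp: Q'_def)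
        ultimately show ?thesis unfolding S_def by simp
      qed
      have s_le: "s \<omega> \<le> C * e \<omega>"
      proof (cases "\<omega> \<in> U")
        case True
        then show ?thesis using elim(2,3) by (simp add: pos_divide_le_eq mult.commute)
      next
        case False
        then have "s \<omega> = 0" unfolding s_def U_def by (intro sum.neutral) auto
        then show ?thesis using elim(3) \<open>C > 0\<close> by simp
      qed
      have "norm (f y \<omega>) \<le> (\<Sum>i<n. indicator (A i) \<omega> * \<xi> i \<omega> * normQ (Q i) y \<omega>)"
        by (rule elim(4))
      also have "\<dots> \<le> 1 / C * s \<omega>"
        unfolding s_def using elim(5) nq_small
        by (intro weighted_sum_le_scaled[where \<xi>="\<lambda>i. \<xi> i \<omega>" and q="\<lambda>i. normQ (Q i) y \<omega>"]) auto
      also have "\<dots> \<le> e \<omega>" using s_le \<open>C > 0\<close> by (simp add: field_simps)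
      finally show ?case .
    qed
  qed
  then show ?thesis using Q' lam \<open>C > 0\<close> by (intro exI[of _ Q'] exI[of _ "1 / C"] exI[of _ lam]) auto
qed

lemma openin_T_c_L0_unit_ball:
  "openin (T_c_L0 M) {y :: 'a \<Rightarrow> 'k::{real_normed_field,second_countable_topology}.
     y \<in> borel_measurable M \<and> (AE \<omega> in M. norm (y \<omega>) < 1)}"
  unfolding openin_T_c_L0
proof (intro conjI ballI)
  fix y :: "'a \<Rightarrow> 'k" assume "y \<in> {y \<in> borel_measurable M. AE \<omega> in M. norm (y \<omega>) < 1}"
  then have y: "y \<in> borel_measurable M" "AE \<omega> in M. norm (y \<omega>) < 1" by auto
  define r where "r \<omega> = (1 - norm (y \<omega>)) / 2" for \<omega>
  have "r \<in> borel_measurable M" unfolding r_def using y(1) by measurable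
  moreover have "AE \<omega> in M. 0 < r \<omega>" using y(2) by eventually_elim (simp add: r_def)
  moreover have "{z \<in> borel_measurable M. AE \<omega> in M. norm (z \<omega> - y \<omega>) \<le> r \<omega>}
      \<subseteq> {y \<in> borel_measurable M. AE \<omega> in M. norm (y \<omega>) < 1}"
  proof (intro subsetI CollectI conjI)
    fix z assume z: "z \<in> {z \<in> borel_measurable M. AE \<omega> in M. norm (z \<omega> - y \<omega>) \<le> r \<omega>}"
    then show "z \<in> borel_measurable M" by simp
    have "AE \<omega> in M. norm (z \<omega> - y \<omega>) \<le> r \<omega>" using z by simp
    with y(2) show "AE \<omega> in M. norm (z \<omega>) < 1"
    proof eventually_elim
      case (elim \<omega>)
      have "norm (z \<omega>) \<le> norm (y \<omega>) + norm (z \<omega> - y \<omega>)" by (metis norm_triangle_sub add.commute)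
      moreover have "2 * norm (z \<omega> - y \<omega>) \<le> 1 - norm (y \<omega>)" using elim(2) by (simp add: r_def)
      ultimately show ?case using elim(1) by linarith
    qed
  qed
  ultimately show "\<exists>\<epsilon>\<in>borel_measurable M. (AE \<omega> in M. 0 < \<epsilon> \<omega>) \<and>
      {z \<in> borel_measurable M. AE \<omega> in M. norm (z \<omega> - y \<omega>) \<le> \<epsilon> \<omega>}
        \<subseteq> {y \<in> borel_measurable M. AE \<omega> in M. norm (y \<omega>) < 1}"
    by blast
qed blast

lemma continuous_hom_small_near_zero:
  fixes f :: "'e::ab_group_add \<Rightarrow> 'a \<Rightarrow> 'k::{real_normed_field,second_countable_topology}"
  assumes M: "prob_space M" and rlc: "random_lc_module M sm \<P>" and hom: "is_L0_hom M sm f"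
    and cont: "continuous_map (T_eps_lambda M \<P>) (T_c_L0 M) f"
  shows "\<exists>Q \<epsilon> lam. finite Q \<and> Q \<subseteq> \<P> \<and> 0 < \<epsilon> \<and> 0 < lam \<and> lam < 1 \<and>
    (\<forall>y\<in>eps_lambda_nbhd M Q \<epsilon> lam. AE \<omega> in M. norm (f y \<omega>) < 1)"
proof -
  note meas = random_lc_module_measurable[OF rlc]
  define G where "G = {y :: 'a \<Rightarrow> 'k. y \<in> borel_measurable M \<and> (AE \<omega> in M. norm (y \<omega>) < 1)}"
  have "openin (T_c_L0 M) G" unfolding G_def by (rule openin_T_c_L0_unit_ball)
  then have "openin (T_eps_lambda M \<P>) {x \<in> topspace (T_eps_lambda M \<P>). f x \<in> G}"
    using cont unfolding continuous_map_def by blast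
  then have "openin (T_eps_lambda M \<P>) {x. f x \<in> G}"
    by (simp add: topspace_T_eps_lambda[OF M meas])
  moreover have "0 \<in> {x. f x \<in> G}"
  proof -
    have "f 0 \<in> borel_measurable M" using hom unfolding is_L0_hom_def by blast
    moreover have "AE \<omega> in M. norm (f 0 \<omega>) < 1" using L0_hom_zero[OF hom] by eventually_elim simp
    ultimately show ?thesis unfolding G_def by blast
  qed
  ultimately have "\<exists>Q \<epsilon> lam. finite Q \<and> Q \<subseteq> \<P> \<and> 0 < \<epsilon> \<and> 0 < lam \<and> lam < 1 \<and>
      (\<lambda>y. 0 + y) ` eps_lambda_nbhd M Q \<epsilon> lam \<subseteq> {x. f x \<in> G}"
    unfolding openin_T_eps_lambda[OF M meas] by (rule bspec)
  then obtain Q \<epsilon> lam where Q: "finite Q \<and> Q \<subseteq> \<P> \<and> 0 < \<epsilon> \<and> 0 < lam \<and> lam < 1"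
    and nbhd: "(\<lambda>y. 0 + y) ` eps_lambda_nbhd M Q \<epsilon> lam \<subseteq> {x. f x \<in> G}"
    by blast
  have "AE \<omega> in M. norm (f y \<omega>) < 1" if "y \<in> eps_lambda_nbhd M Q \<epsilon> lam" for y
  proof -
    have "f (0 + y) \<in> G" using nbhd that by blast
    then show ?thesis unfolding G_def by simp
  qed
  with Q show ?thesis by blast
qed

text \<open>Key scaling step: if the random scalar t makes |t| normQ Q x < epsilon a.s. on an event U
  of probability > 1 - lam, then t x lies in the neighbourhood, so |t| |f x| < 1 a.s.\<close>
lemma small_near_zero_scaled:
  fixes f :: "'e::ab_group_add \<Rightarrow> 'a \<Rightarrow> 'k::{real_normed_field,second_countable_topology}"
    and t :: "'a \<Rightarrow> real"
  assumes M: "prob_space M" and rlc: "random_lc_module M sm \<P>" and hom: "is_L0_hom M sm f"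
    and Q: "finite Q" "Q \<subseteq> \<P>"
    and small: "\<forall>y\<in>eps_lambda_nbhd M Q \<epsilon> lam. AE \<omega> in M. norm (f y \<omega>) < 1"
    and U: "U \<in> sets M" "measure M U > 1 - lam"
    and t: "t \<in> borel_measurable M" "AE \<omega> in M. \<omega> \<in> U \<longrightarrow> \<bar>t \<omega>\<bar> * normQ Q x \<omega> < \<epsilon>"
  shows "AE \<omega> in M. \<bar>t \<omega>\<bar> * norm (f x \<omega>) < 1"
proof -
  interpret prob_space M by (rule M)
  define s :: "'a \<Rightarrow> 'k" where "s \<omega> = of_real (t \<omega>)" for \<omega>
  have s_meas: "s \<in> borel_measurable M" unfolding s_def using t(1) by measurable
  let ?S = "{\<omega>\<in>space M. normQ Q (sm s x) \<omega> < \<epsilon>}"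
  have "AE \<omega> in M. \<omega> \<in> U \<longrightarrow> \<omega> \<in> ?S"
    using normQ_module_scale[OF rlc Q s_meas, of x] t(2) AE_space
    by eventually_elim (simp add: s_def)
  moreover have "normQ Q (sm s x) \<in> borel_measurable M" by (rule normQ_random_measurable[OF rlc Q])
  then have "?S \<in> sets M" by measurable
  ultimately have "measure M U \<le> measure M ?S" by (rule finite_measure_mono_AE)
  then have "sm s x \<in> eps_lambda_nbhd M Q \<epsilon> lam" using U(2) unfolding eps_lambda_nbhd_def by simp
  then have "AE \<omega> in M. norm (f (sm s x) \<omega>) < 1" using small by blast
  moreover note L0_hom_scale[OF hom s_meas, of x]
  ultimately show ?thesis
  proof eventually_elim
    case (elim \<omega>)
    have "norm (f (sm s x) \<omega>) = \<bar>t \<omega>\<bar> * norm (f x \<omega>)"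
      unfolding elim(2) s_def by (simp add: norm_mult)
    with elim(1) show ?case by simp
  qed
qed

text \<open>Necessity of the bound on U: scaling by epsilon/(2 normQ Q x) gives |f x| \<le> (2/epsilon) normQ Q x
  where the seminorm is positive on U; scaling by arbitrarily large integers shows f x = 0 a.s.
  everywhere else.\<close>
lemma small_near_zero_imp_bound:
  fixes f :: "'e::ab_group_add \<Rightarrow> 'a \<Rightarrow> 'k::{real_normed_field,second_countable_topology}"
  assumes M: "prob_space M" and rlc: "random_lc_module M sm \<P>" and hom: "is_L0_hom M sm f"
    and Q: "finite Q" "Q \<subseteq> \<P>" and "0 < \<epsilon>"
    and small: "\<forall>y\<in>eps_lambda_nbhd M Q \<epsilon> lam. AE \<omega> in M. norm (f y \<omega>) < 1"
    and U: "U \<in> sets M" "measure M U > 1 - lam"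
  shows "AE \<omega> in M. norm (f x \<omega>) \<le> indicator U \<omega> * (2 / \<epsilon>) * normQ Q x \<omega>"
proof -
  define q where "q = normQ Q x"
  have [measurable]: "q \<in> borel_measurable M" "U \<in> sets M"
    unfolding q_def by (rule normQ_random_measurable[OF rlc Q], rule U(1))
  have q_nonneg: "0 \<le> q \<omega>" for \<omega> unfolding q_def by (rule normQ_nonneg[OF Q(1)])
  have q_zero: "q \<omega> = 0" if "\<not> 0 < q \<omega>" for \<omega> using that q_nonneg[of \<omega>] by simp
  note scaled = small_near_zero_scaled[OF M rlc hom Q small U, where x = x, folded q_def]
  define t where "t \<omega> = (if \<omega> \<in> U \<and> 0 < q \<omega> then \<epsilon> / (2 * q \<omega>) else 0)" for \<omega>
  define r where "r m \<omega> = (if \<omega> \<in> U \<and> 0 < q \<omega> then 0 else real m)" for m :: nat and \<omega>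
  have "AE \<omega> in M. \<bar>t \<omega>\<bar> * norm (f x \<omega>) < 1"
  proof (rule scaled)
    show "t \<in> borel_measurable M" unfolding t_def by measurable
    show "AE \<omega> in M. \<omega> \<in> U \<longrightarrow> \<bar>t \<omega>\<bar> * q \<omega> < \<epsilon>"
      using \<open>0 < \<epsilon>\<close> by (intro AE_I2) (auto simp: t_def)
  qed
  moreover have "AE \<omega> in M. \<bar>r m \<omega>\<bar> * norm (f x \<omega>) < 1" for m
  proof (rule scaled)
    show "r m \<in> borel_measurable M" unfolding r_def by measurable
    show "AE \<omega> in M. \<omega> \<in> U \<longrightarrow> \<bar>r m \<omega>\<bar> * q \<omega> < \<epsilon>"
      using \<open>0 < \<epsilon>\<close> by (intro AE_I2) (auto simp: r_def q_zero)
  qed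
  then have "AE \<omega> in M. \<forall>m. \<bar>r m \<omega>\<bar> * norm (f x \<omega>) < 1" by (simp add: AE_all_countable)
  ultimately show ?thesis
    unfolding q_def[symmetric]
  proof eventually_elim
    case (elim \<omega>)
    show ?case
    proof (cases "\<omega> \<in> U \<and> 0 < q \<omega>")
      case True
      then have "\<epsilon> / (2 * q \<omega>) * norm (f x \<omega>) < 1"
        using elim(1) \<open>0 < \<epsilon>\<close> by (simp add: t_def)
      then have "\<epsilon> * norm (f x \<omega>) < 2 * q \<omega>"
        using True by (simp add: field_simps)
      then have "norm (f x \<omega>) \<le> (2 / \<epsilon>) * q \<omega>"
        using \<open>0 < \<epsilon>\<close> by (simp add: field_simps)
      then show ?thesis using True by simp
    next
      case False
      then have "\<bar>r m \<omega>\<bar> = real m" for m unfolding r_def by auto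
      then have small_m: "real m * norm (f x \<omega>) < 1" for m using spec[OF elim(2), of m] by simp
      have "norm (f x \<omega>) = 0"
      proof (rule ccontr)
        assume "norm (f x \<omega>) \<noteq> 0"
        then have "0 < norm (f x \<omega>)" by simp
        from ex_less_of_nat_mult[OF this, of 1]
        obtain m where "1 < real m * norm (f x \<omega>)" by blast
        with small_m[of m] show False by simp
      qed
      moreover have "0 \<le> indicator U \<omega> * (2 / \<epsilon>) * q \<omega>"
        using \<open>0 < \<epsilon>\<close> q_nonneg[of \<omega>] by (intro mult_nonneg_nonneg) auto
      ultimately show ?thesis by simp
    qed
  qed
qed

lemma indicator_UN_le_sum:
  fixes c :: real and N :: nat and A :: "nat \<Rightarrow> 'a set"
  assumes "0 \<le> c"
  shows "indicator (\<Union>i<N. A i) \<omega> * c \<le> (\<Sum>i<N. indicator (A i) \<omega> * c)"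
proof (cases "\<omega> \<in> (\<Union>i<N. A i)")
  case True
  then obtain j where "j < N" "\<omega> \<in> A j" by blast
  then have "indicator (\<Union>i<N. A i) \<omega> * c = indicator (A j) \<omega> * c" using True by simp
  also have "\<dots> \<le> (\<Sum>i<N. indicator (A i) \<omega> * c)"
    using \<open>j < N\<close> assms by (intro member_le_sum) auto
  finally show ?thesis .
qed (use assms in \<open>auto intro: sum_nonneg\<close>)

text \<open>Necessity: combine the previous step with a finite family of atoms of total probability
  > 1 - lam, all with the same weight 2/epsilon and the same finite subfamily Q.\<close>
lemma continuous_imp_atomic_bound:
  fixes f :: "'e::ab_group_add \<Rightarrow> 'a \<Rightarrow> 'k::{real_normed_field,second_countable_topology}"
  assumes M: "prob_space M" and atomic: "ess_purely_atomic M"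
    and rlc: "random_lc_module M sm \<P>" and hom: "is_L0_hom M sm f"
    and cont: "continuous_map (T_eps_lambda M \<P>) (T_c_L0 M) f"
  shows "\<exists>n::nat. \<exists>A :: nat \<Rightarrow> 'a set. \<exists>\<xi> :: nat \<Rightarrow> 'a \<Rightarrow> real. \<exists>Q :: nat \<Rightarrow> ('e \<Rightarrow> 'a \<Rightarrow> real) set.
       (\<forall>i<n. P_atom M (A i) \<and> \<xi> i \<in> borel_measurable M \<and> (AE \<omega> in M. 0 \<le> \<xi> i \<omega>) \<and>
              finite (Q i) \<and> Q i \<subseteq> \<P>) \<and>
       (\<forall>x. AE \<omega> in M. norm (f x \<omega>) \<le> (\<Sum>i<n. indicator (A i) \<omega> * \<xi> i \<omega> * normQ (Q i) x \<omega>))"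
proof -
  obtain Q \<epsilon> lam where Q: "finite Q" "Q \<subseteq> \<P>" and "0 < \<epsilon>" "0 < lam"
    and small: "\<forall>y\<in>eps_lambda_nbhd M Q \<epsilon> lam. AE \<omega> in M. norm (f y \<omega>) < 1"
    using continuous_hom_small_near_zero[OF M rlc hom cont] by blast
  obtain A :: "nat \<Rightarrow> 'a set" and N where atoms: "\<And>i. P_atom M (A i)"
    and U: "(\<Union>i<N. A i) \<in> sets M" "measure M (\<Union>i<N. A i) > 1 - lam"
    using purely_atomic_exhaustion[OF M atomic \<open>0 < lam\<close>] by blast
  have bound: "AE \<omega> in M. norm (f x \<omega>) \<le> (\<Sum>i<N. indicator (A i) \<omega> * (2 / \<epsilon>) * normQ Q x \<omega>)" for x
    using small_near_zero_imp_bound[OF M rlc hom Q \<open>0 < \<epsilon>\<close> small U, of x]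
  proof eventually_elim
    case (elim \<omega>)
    have "0 \<le> 2 / \<epsilon> * normQ Q x \<omega>" using \<open>0 < \<epsilon>\<close> normQ_nonneg[OF Q(1)] by simp
    from indicator_UN_le_sum[OF this, where N = N and A = A and \<omega> = \<omega>] elim
    show ?case by (simp add: mult.assoc)
  qed
  show ?thesis
  proof (intro exI[of _ N] exI[of _ A] exI[of _ "\<lambda>i \<omega>. 2 / \<epsilon>"] exI[of _ "\<lambda>i. Q"] conjI allI impI)
    fix i show "P_atom M (A i)" by (rule atoms)
    show "(\<lambda>\<omega>. 2 / \<epsilon>) \<in> borel_measurable M" by simp
    show "AE \<omega> in M. 0 \<le> 2 / \<epsilon>" using \<open>0 < \<epsilon>\<close> by simp
    show "finite Q" "Q \<subseteq> \<P>" by (fact Q)+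
  next
    fix x show "AE \<omega> in M. norm (f x \<omega>) \<le> (\<Sum>i<N. indicator (A i) \<omega> * (2 / \<epsilon>) * normQ Q x \<omega>)"
      by (rule bound)
  qed
qed

theorem lemma3p7:
  fixes M :: "'a measure"
    and sm :: "('a \<Rightarrow> 'k::{real_normed_field,second_countable_topology}) \<Rightarrow> 'e::ab_group_add \<Rightarrow> 'e"
    and \<P> :: "('e \<Rightarrow> 'a \<Rightarrow> real) set"
    and f :: "'e \<Rightarrow> 'a \<Rightarrow> 'k"
  assumes "prob_space M"
    and "ess_purely_atomic M"
    and "random_lc_module M sm \<P>"
    and "is_L0_hom M sm f"
  shows "continuous_map (T_eps_lambda M \<P>) (T_c_L0 M) f \<longleftrightarrow>
    (\<exists>n::nat. \<exists>A :: nat \<Rightarrow> 'a set. \<exists>\<xi> :: nat \<Rightarrow> 'a \<Rightarrow> real. \<exists>Q :: nat \<Rightarrow> ('e \<Rightarrow> 'a \<Rightarrow> real) set.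
       (\<forall>i<n. P_atom M (A i) \<and> \<xi> i \<in> borel_measurable M \<and> (AE \<omega> in M. 0 \<le> \<xi> i \<omega>) \<and>
              finite (Q i) \<and> Q i \<subseteq> \<P>) \<and>
       (\<forall>x. AE \<omega> in M. norm (f x \<omega>) \<le> (\<Sum>i<n. indicator (A i) \<omega> * \<xi> i \<omega> * normQ (Q i) x \<omega>)))"
    (is "_ \<longleftrightarrow> (\<exists>n A \<xi> Q. ?data n A \<xi> Q \<and> ?bound n A \<xi> Q)")
proof
  assume "continuous_map (T_eps_lambda M \<P>) (T_c_L0 M) f"
  then show "\<exists>n A \<xi> Q. ?data n A \<xi> Q \<and> ?bound n A \<xi> Q"
    by (rule continuous_imp_atomic_bound[OF assms])
next
  assume "\<exists>n A \<xi> Q. ?data n A \<xi> Q \<and> ?bound n A \<xi> Q"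
  then obtain n A \<xi> Q where data: "?data n A \<xi> Q" and bound: "?bound n A \<xi> Q" by blast
  show "continuous_map (T_eps_lambda M \<P>) (T_c_L0 M) f"
  proof (rule continuous_map_if_small_near_zero[OF assms(1,3,4)])
    fix e :: "'a \<Rightarrow> real" assume "e \<in> borel_measurable M" "AE \<omega> in M. 0 < e \<omega>"
    with atomic_bound_imp_small_near_zero[OF assms(1,3) data bound]
    show "\<exists>Q \<delta> lam. finite Q \<and> Q \<subseteq> \<P> \<and> 0 < \<delta> \<and> 0 < lam \<and> lam < 1 \<and>
        (\<forall>y\<in>eps_lambda_nbhd M Q \<delta> lam. AE \<omega> in M. norm (f y \<omega>) \<le> e \<omega>)"
      by blast
  qed
qed

end
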